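(* For every query $Q$ of the query sublanguage $\mathcal{L}^{\mathrm{query}}$, the rewriting system $\mathcal{R}^{\mathrm{query}}_{\Sigma,\mathcal{D}}(Q)$ is terminating.
   Context: Setting: $\Sigma$ is a signature of facts containing sorts $\mathsf{Fact}$ and $\mathsf{Bool}$, and $\mathcal{D}$ is a $\Sigma$-algebra of facts (data types defined by directed equations and equational attributes; every ground Boolean term simplifies to true or false). A database is a finite multiset of facts, built with an associative-commutative operator $\circ$ with identity $\emptyset$. Patterns are multisets of (possibly non-ground) facts wrapped by modalities $[\_]_!$ (fact kept), $[\_]_?$ (fact considered at most once during a quantifier evaluation but not removed), $[\_]_0$ (fact deleted) and a modality for fresh facts; a pattern is terminating and preserving if it uses only $[\_]_!$ and $[\_]_?$ and contains at least one fact under $[\_]_?$. Conditions are built from $\mathsf{False}$, $\{B\}$ ($B$ Boolean term), negation, disjunction and $\exists P.\psi$ with $P$ a terminating and preserving pattern. Queries of $\mathcal{L}^{\mathrm{query}}$ are built from $\emptyset$, facts $f$, union $Q\oplus Q'$ (multiset union of results), conditionals $\phi\Rightarrow Q$ ($\phi$ a condition), and iteration $\mathrm{from}\ P.Q$ with $P$ a terminating and preserving pattern. The rewriting system $\mathcal{R}^{\mathrm{query}}_{\Sigma,\mathcal{D}}(Q)$ rewrites top-level state terms $\{F,F',S\}^q$, where $F$ is the database, $F'$ the partial answer and $S$ a stack of frames indexed by subqueries of $Q$ together with the current substitution; evaluation starts from $\mathrm{Init}_Q(F)=\{F,\emptyset,[\,]_Q\}^q$ and normal forms are $\mathrm{Ans}(F')$.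 Union frames are split into two frames for the arguments, a fact frame adds the instantiated fact to the partial answer, a conditional frame embeds the (terminating) stack evaluation of the condition and then either evaluates the body or is dropped, and $\mathrm{from}\ P.R$ is evaluated with an iterator frame holding an iterator state (initially the whole database): each unfolding step matches the $[\_]_!$ and $[\_]_?$ facts of $P$ against the iterator state, removes the matched $[\_]_?$ facts from it and pushes a frame for $R$ with the extended substitution; the iterator frame is removed when no match remains. *)

theory Defs
  imports Main "HOL-Library.Multiset"
begin

text \<open>The algebra of facts D is kept abstract. Non-ground fact terms have type 't,
  Boolean terms type 'b, variables type 'x, data values (canonical forms of ground
  data terms) type 'd, and ground facts (canonical forms) type 'v.  The algebra enters only through
    inst  : instantiate a fact term under a substitution and simplify to a ground fact,
    bval  : instantiate a Boolean term and simplify it (to true or false),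
    fvars : the variables of a fact term.\<close>

datatype modality = MKeep | MOnce | MDel | MFresh
  \<comment> \<open>[_]_!, [_]_?, [_]_0, fresh\<close>

type_synonym 't pat = "(modality \<times> 't) multiset"

definition term_pres :: "'t pat \<Rightarrow> bool" where
  "term_pres P \<longleftrightarrow> (\<forall>p\<in>#P. fst p \<in> {MKeep, MOnce}) \<and> (\<exists>p\<in>#P. fst p = MOnce)"

datatype ('t, 'b) cond =
    CFalse
  | CBool 'b
  | CNeg "('t, 'b) cond"
  | COr "('t, 'b) cond" "('t, 'b) cond"
  | CEx "'t pat" "('t, 'b) cond"

datatype ('t, 'b) query =
    QEmpty
  | QFact 't
  | QUnion "('t, 'b) query" "('t, 'b) query"
  | QIf "('t, 'b) cond" "('t, 'b) query"
  | QFrom "'t pat" "('t, 'b) query"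

fun wf_cond :: "('t, 'b) cond \<Rightarrow> bool" where
  "wf_cond CFalse = True"
| "wf_cond (CBool B) = True"
| "wf_cond (CNeg c) = wf_cond c"
| "wf_cond (COr c d) = (wf_cond c \<and> wf_cond d)"
| "wf_cond (CEx P c) = (term_pres P \<and> wf_cond c)"

text \<open>Membership in L^query: all patterns (in iterations and in existential
  conditions) are terminating and preserving.\<close>
fun wf_query :: "('t, 'b) query \<Rightarrow> bool" where
  "wf_query QEmpty = True"
| "wf_query (QFact f) = True"
| "wf_query (QUnion q r) = (wf_query q \<and> wf_query r)"
| "wf_query (QIf c q) = (wf_cond c \<and> wf_query q)"
| "wf_query (QFrom P q) = (term_pres P \<and> wf_query q)"

fun subc :: "('t, 'b) cond \<Rightarrow> ('t, 'b) cond set" where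
  "subc CFalse = {CFalse}"
| "subc (CBool B) = {CBool B}"
| "subc (CNeg c) = insert (CNeg c) (subc c)"
| "subc (COr c d) = insert (COr c d) (subc c \<union> subc d)"
| "subc (CEx P c) = insert (CEx P c) (subc c)"

fun subq :: "('t, 'b) query \<Rightarrow> ('t, 'b) query set" where
  "subq QEmpty = {QEmpty}"
| "subq (QFact f) = {QFact f}"
| "subq (QUnion q r) = insert (QUnion q r) (subq q \<union> subq r)"
| "subq (QIf c q) = insert (QIf c q) (subq q)"
| "subq (QFrom P q) = insert (QFrom P q) (subq q)"

definition qconds :: "('t, 'b) query \<Rightarrow> ('t, 'b) cond set" where
  "qconds Q = (\<Union>{subc c | c q. QIf c q \<in> subq Q})"

text \<open>matches inst fvars \<sigma> P I \<sigma>' K: the [_]_! and [_]_? facts of P, instantiated by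
  the extension \<sigma>' of \<sigma> (binding exactly the additional variables of these facts),
  form a sub-multiset of the iterator state I; K is the multiset of matched [_]_? facts
  (which is removed from the iterator state).\<close>
definition matches ::
  "(('x \<rightharpoonup> 'd) \<Rightarrow> 't \<Rightarrow> 'v) \<Rightarrow> ('t \<Rightarrow> 'x set) \<Rightarrow> ('x \<rightharpoonup> 'd) \<Rightarrow> 't pat
   \<Rightarrow> 'v multiset \<Rightarrow> ('x \<rightharpoonup> 'd) \<Rightarrow> 'v multiset \<Rightarrow> bool" where
  "matches inst fvars \<sigma> P I \<sigma>' K \<longleftrightarrow>
     \<sigma> \<subseteq>\<^sub>m \<sigma>' \<and>
     dom \<sigma>' = dom \<sigma> \<union> (\<Union>p\<in>{p \<in> set_mset P. fst p \<in> {MKeep, MOnce}}. fvars (snd p)) \<and>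
     image_mset (\<lambda>p. inst \<sigma>' (snd p)) (filter_mset (\<lambda>p. fst p \<in> {MKeep, MOnce}) P) \<subseteq># I \<and>
     K = image_mset (\<lambda>p. inst \<sigma>' (snd p)) (filter_mset (\<lambda>p. fst p = MOnce) P)"

datatype ('t, 'b, 'x, 'd, 'v) cframe =
    CEvalF "('t, 'b) cond" "'x \<rightharpoonup> 'd"
  | CNegF                                    \<comment> \<open>negate the result of the frame above\<close>
  | COrF "('t, 'b) cond" "'x \<rightharpoonup> 'd"          \<comment> \<open>right disjunct still pending\<close>
  | CExIt "'t pat" "('t, 'b) cond" "'x \<rightharpoonup> 'd" "'v multiset"

text \<open>A condition evaluation state: a stack of frames (head = top) and a result
  register (None while a frame is being evaluated, Some b when a value is returned).\<close>
type_synonym ('t, 'b, 'x, 'd, 'v) cstate = "('t, 'b, 'x, 'd, 'v) cframe list \<times> bool option"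

inductive cstep ::
  "(('x \<rightharpoonup> 'd) \<Rightarrow> 't \<Rightarrow> 'v) \<Rightarrow> (('x \<rightharpoonup> 'd) \<Rightarrow> 'b \<Rightarrow> bool) \<Rightarrow> ('t \<Rightarrow> 'x set) \<Rightarrow> 'v multiset
   \<Rightarrow> ('t, 'b, 'x, 'd, 'v) cstate \<Rightarrow> ('t, 'b, 'x, 'd, 'v) cstate \<Rightarrow> bool"
  for inst bval fvars F where
  c_false: "cstep inst bval fvars F (CEvalF CFalse \<sigma> # S, None) (S, Some False)"
| c_bool: "cstep inst bval fvars F (CEvalF (CBool B) \<sigma> # S, None) (S, Some (bval \<sigma> B))"
| c_neg: "cstep inst bval fvars F (CEvalF (CNeg c) \<sigma> # S, None) (CEvalF c \<sigma> # CNegF # S, None)"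
| c_neg_ret: "cstep inst bval fvars F (CNegF # S, Some b) (S, Some (\<not> b))"
| c_or: "cstep inst bval fvars F (CEvalF (COr c d) \<sigma> # S, None) (CEvalF c \<sigma> # COrF d \<sigma> # S, None)"
| c_or_true: "cstep inst bval fvars F (COrF d \<sigma> # S, Some True) (S, Some True)"
| c_or_false: "cstep inst bval fvars F (COrF d \<sigma> # S, Some False) (CEvalF d \<sigma> # S, None)"
| c_ex: "cstep inst bval fvars F (CEvalF (CEx P c) \<sigma> # S, None) (CExIt P c \<sigma> F # S, None)"
| c_ex_unfold: "matches inst fvars \<sigma> P I \<sigma>' K \<Longrightarrow>
    cstep inst bval fvars F (CExIt P c \<sigma> I # S, None) (CEvalF c \<sigma>' # CExIt P c \<sigma> (I - K) # S, None)"
| c_ex_none: "\<not> (\<exists>\<sigma>' K. matches inst fvars \<sigma> P I \<sigma>' K) \<Longrightarrow>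
    cstep inst bval fvars F (CExIt P c \<sigma> I # S, None) (S, Some False)"
| c_ex_true: "cstep inst bval fvars F (CExIt P c \<sigma> I # S, Some True) (S, Some True)"
| c_ex_false: "cstep inst bval fvars F (CExIt P c \<sigma> I # S, Some False) (CExIt P c \<sigma> I # S, None)"

datatype ('t, 'b, 'x, 'd, 'v) qframe =
    QEvalF "('t, 'b) query" "'x \<rightharpoonup> 'd"
  | QIterF "'t pat" "('t, 'b) query" "'x \<rightharpoonup> 'd" "'v multiset"
  | QCondF "('t, 'b) cond" "('t, 'b) query" "'x \<rightharpoonup> 'd" "('t, 'b, 'x, 'd, 'v) cframe list \<times> bool option"

datatype ('t, 'b, 'x, 'd, 'v) qstate =
    QSt "'v multiset" "'v multiset" "('t, 'b, 'x, 'd, 'v) qframe list"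
      \<comment> \<open>{F, F', S}^q: database, partial answer, stack (head = top)\<close>
  | Ans "'v multiset"

definition Init :: "('t, 'b) query \<Rightarrow> 'v multiset \<Rightarrow> ('t, 'b, 'x, 'd, 'v) qstate" where
  "Init Q F = QSt F {#} [QEvalF Q Map.empty]"

inductive qstep ::
  "(('x \<rightharpoonup> 'd) \<Rightarrow> 't \<Rightarrow> 'v) \<Rightarrow> (('x \<rightharpoonup> 'd) \<Rightarrow> 'b \<Rightarrow> bool) \<Rightarrow> ('t \<Rightarrow> 'x set)
   \<Rightarrow> ('t, 'b, 'x, 'd, 'v) qstate \<Rightarrow> ('t, 'b, 'x, 'd, 'v) qstate \<Rightarrow> bool"
  for inst bval fvars where
  q_done: "qstep inst bval fvars (QSt F A []) (Ans A)"
| q_empty: "qstep inst bval fvars (QSt F A (QEvalF QEmpty \<sigma> # S)) (QSt F A S)"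
| q_fact: "qstep inst bval fvars (QSt F A (QEvalF (QFact f) \<sigma> # S)) (QSt F (add_mset (inst \<sigma> f) A) S)"
| q_union: "qstep inst bval fvars (QSt F A (QEvalF (QUnion q r) \<sigma> # S))
             (QSt F A (QEvalF q \<sigma> # QEvalF r \<sigma> # S))"
| q_if: "qstep inst bval fvars (QSt F A (QEvalF (QIf c q) \<sigma> # S))
          (QSt F A (QCondF c q \<sigma> ([CEvalF c \<sigma>], None) # S))"
| q_if_step: "cstep inst bval fvars F cs cs' \<Longrightarrow>
    qstep inst bval fvars (QSt F A (QCondF c q \<sigma> cs # S)) (QSt F A (QCondF c q \<sigma> cs' # S))"
| q_if_true: "qstep inst bval fvars (QSt F A (QCondF c q \<sigma> ([], Some True) # S)) (QSt F A (QEvalF q \<sigma> # S))"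
| q_if_false: "qstep inst bval fvars (QSt F A (QCondF c q \<sigma> ([], Some False) # S)) (QSt F A S)"
| q_from: "qstep inst bval fvars (QSt F A (QEvalF (QFrom P q) \<sigma> # S)) (QSt F A (QIterF P q \<sigma> F # S))"
| q_from_unfold: "matches inst fvars \<sigma> P I \<sigma>' K \<Longrightarrow>
    qstep inst bval fvars (QSt F A (QIterF P q \<sigma> I # S)) (QSt F A (QEvalF q \<sigma>' # QIterF P q \<sigma> (I - K) # S))"
| q_from_none: "\<not> (\<exists>\<sigma>' K. matches inst fvars \<sigma> P I \<sigma>' K) \<Longrightarrow>
    qstep inst bval fvars (QSt F A (QIterF P q \<sigma> I # S)) (QSt F A S)"

fun wf_cframe :: "('t, 'b) query \<Rightarrow> ('t, 'b, 'x, 'd, 'v) cframe \<Rightarrow> bool" where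
  "wf_cframe Q (CEvalF c \<sigma>) = (c \<in> qconds Q)"
| "wf_cframe Q CNegF = True"
| "wf_cframe Q (COrF d \<sigma>) = (d \<in> qconds Q)"
| "wf_cframe Q (CExIt P c \<sigma> I) = (CEx P c \<in> qconds Q)"

fun wf_qframe :: "('t, 'b) query \<Rightarrow> ('t, 'b, 'x, 'd, 'v) qframe \<Rightarrow> bool" where
  "wf_qframe Q (QEvalF q \<sigma>) = (q \<in> subq Q)"
| "wf_qframe Q (QIterF P q \<sigma> I) = (QFrom P q \<in> subq Q)"
| "wf_qframe Q (QCondF c q \<sigma> cs) = (QIf c q \<in> subq Q \<and> (\<forall>fr\<in>set (fst cs). wf_cframe Q fr))"

fun wf_qstate :: "('t, 'b) query \<Rightarrow> ('t, 'b, 'x, 'd, 'v) qstate \<Rightarrow> bool" where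
  "wf_qstate Q (QSt F A S) = (\<forall>fr\<in>set S. wf_qframe Q fr)"
| "wf_qstate Q (Ans A) = True"

definition R_query ::
  "(('x \<rightharpoonup> 'd) \<Rightarrow> 't \<Rightarrow> 'v) \<Rightarrow> (('x \<rightharpoonup> 'd) \<Rightarrow> 'b \<Rightarrow> bool) \<Rightarrow> ('t \<Rightarrow> 'x set) \<Rightarrow> ('t, 'b) query
   \<Rightarrow> ('t, 'b, 'x, 'd, 'v) qstate \<Rightarrow> ('t, 'b, 'x, 'd, 'v) qstate \<Rightarrow> bool" where
  "R_query inst bval fvars Q s t \<longleftrightarrow> wf_qstate Q s \<and> qstep inst bval fvars s t"

definition terminating :: "('a \<Rightarrow> 'a \<Rightarrow> bool) \<Rightarrow> bool" where
  "terminating r \<longleftrightarrow> \<not> (\<exists>f. \<forall>i. r (f i) (f (Suc i)))"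

end

theory Submission
  imports Defs
begin

(* Rank every frame by the size of the subquery or subcondition indexing it, refined for
   iterator frames by the size of the iterator state and for conditional frames by the rank
   of the embedded condition evaluation.  Each rule pops the top frame and pushes finitely
   many frames of smaller rank; an unfolding step may push the iterator frame again, but
   with a strictly smaller iterator state, because a terminating and preserving pattern
   always matches at least one [_]_? fact, which is removed.  Hence the multiset of ranks of
   the stack decreases in the well-founded multiset extension of the rank order. *)

lemma terminating_if_converse_in_wf:
  assumes "wf r" and "\<And>s t. R s t \<Longrightarrow> (t, s) \<in> r"
  shows "terminating R"
  unfolding terminating_def
proof
  assume "\<exists>f. \<forall>i. R (f i) (f (Suc i))"
  then obtain f where "\<forall>i. (f (Suc i), f i) \<in> r" using assms(2) by blast
  then show False using assms(1) wf_iff_no_infinite_down_chain by blast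
qed

lemma mult_replace_by_smaller:
  assumes "\<forall>y\<in>#N. (y, x) \<in> r"
  shows "(N + M, add_mset x M) \<in> mult r"
  using one_step_implies_mult[of "{#x#}" N r M] assms by (simp add: add.commute)

lemma mult_replace_by_one_smaller:
  "(y, x) \<in> r \<Longrightarrow> (add_mset y M, add_mset x M) \<in> mult r"
  using mult_replace_by_smaller[of "{#y#}"] by simp

lemma mult_replace_by_two_smaller:
  "(y, x) \<in> r \<Longrightarrow> (z, x) \<in> r \<Longrightarrow> (add_mset y (add_mset z M), add_mset x M) \<in> mult r"
  using mult_replace_by_smaller[of "{#y, z#}"] by simp

lemma matches_size_Diff_less:
  assumes "matches inst fvars \<sigma> P I \<sigma>' K" and "term_pres P"
  shows "size (I - K) < size I"
proof -
  let ?inst = "image_mset (\<lambda>p. inst \<sigma>' (snd p))"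
  have K: "K = ?inst (filter_mset (\<lambda>p. fst p = MOnce) P)"
    and matched: "?inst (filter_mset (\<lambda>p. fst p \<in> {MKeep, MOnce}) P) \<subseteq># I"
    using assms(1) unfolding matches_def by auto
  have "filter_mset (\<lambda>p. fst p = MOnce) P \<subseteq># filter_mset (\<lambda>p. fst p \<in> {MKeep, MOnce}) P"
    by (rule filter_mset_mono_strong) auto
  then have "K \<subseteq># I"
    unfolding K using matched by (metis image_mset_subseteq_mono subset_mset.order_trans)
  moreover have "K \<noteq> {#}"
    using assms(2) unfolding term_pres_def K by (auto simp: filter_mset_eq_conv)
  ultimately show ?thesis
    using size_mset_mono[of K I] by (simp add: size_Diff_submset nonempty_has_size)
qed

text \<open>An evaluation frame for a formula of size n is ranked 2n+1; the frames it pushes that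
  still refer to an immediate subformula of size m (pending disjunct, iterator, conditional)
  are ranked 2m+2, which lies strictly between 2m+1 and 2n+1.\<close>

fun cframe_rank :: "('t, 'b, 'x, 'd, 'v) cframe \<Rightarrow> nat \<times> nat" where
  "cframe_rank (CEvalF c \<sigma>) = (2 * size c + 1, 0)"
| "cframe_rank CNegF = (0, 0)"
| "cframe_rank (COrF d \<sigma>) = (2 * size d + 2, 0)"
| "cframe_rank (CExIt P c \<sigma> I) = (2 * size c + 2, size I)"

text \<open>The register is needed only for resuming an iterator after a false result, the one
  step that leaves the stack unchanged (it empties the register).\<close>

definition cstate_order :: "(('t, 'b, 'x, 'd, 'v) cstate \<times> ('t, 'b, 'x, 'd, 'v) cstate) set" where
  "cstate_order = inv_image
     (mult (less_than <*lex*> less_than) <*lex*> measure (\<lambda>r. if r = None then 0 else 1))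
     (\<lambda>(S, r). (mset (map cframe_rank S), r))"

lemma wf_cstate_order: "wf cstate_order"
  unfolding cstate_order_def by (intro wf_inv_image wf_lex_prod wf_mult wf_less_than wf_measure)

lemma cstep_decreases:
  assumes "cstep inst bval fvars F cs cs'"
    and "\<forall>P c \<sigma> I. CExIt P c \<sigma> I \<in> set (fst cs) \<longrightarrow> term_pres P"
  shows "(cs', cs) \<in> cstate_order"
  using assms
proof (induction rule: cstep.induct)
  case (c_ex_unfold \<sigma> P I \<sigma>' K c S)
  then have "size (I - K) < size I" using matches_size_Diff_less by fastforce
  then show ?case by (auto simp: cstate_order_def intro!: mult_replace_by_two_smaller)
qed (auto simp: cstate_order_def subset_implies_mult
  intro!: mult_replace_by_one_smaller mult_replace_by_two_smaller)

lemma wf_query_subq: "q \<in> subq Q \<Longrightarrow> wf_query Q \<Longrightarrow> wf_query q"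
  by (induction Q) auto

lemma wf_cond_subc: "c \<in> subc d \<Longrightarrow> wf_cond d \<Longrightarrow> wf_cond c"
  by (induction d) auto

lemma wf_cond_qconds: "c \<in> qconds Q \<Longrightarrow> wf_query Q \<Longrightarrow> wf_cond c"
  unfolding qconds_def using wf_query_subq wf_cond_subc by fastforce

fun qframe_rank :: "('t, 'b, 'x, 'd, 'v) qframe \<Rightarrow> nat \<times> nat \<times> ('t, 'b, 'x, 'd, 'v) cstate" where
  "qframe_rank (QEvalF q \<sigma>) = (2 * size q + 1, 0, ([], None))"
| "qframe_rank (QIterF P q \<sigma> I) = (2 * size q + 2, size I, ([], None))"
| "qframe_rank (QCondF c q \<sigma> cs) = (2 * size q + 2, 0, cs)"

fun qstate_measure ::
  "('t, 'b, 'x, 'd, 'v) qstate \<Rightarrow> nat \<times> (nat \<times> nat \<times> ('t, 'b, 'x, 'd, 'v) cstate) multiset" where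
  "qstate_measure (QSt F A S) = (1, mset (map qframe_rank S))"
| "qstate_measure (Ans A) = (0, {#})"

definition qstate_order :: "(('t, 'b, 'x, 'd, 'v) qstate \<times> ('t, 'b, 'x, 'd, 'v) qstate) set" where
  "qstate_order = inv_image
     (less_than <*lex*> mult (less_than <*lex*> less_than <*lex*> cstate_order)) qstate_measure"

lemma wf_qstate_order: "wf qstate_order"
  unfolding qstate_order_def by (intro wf_inv_image wf_lex_prod wf_mult wf_less_than wf_cstate_order)

lemma qstep_decreases:
  assumes "qstep inst bval fvars s t" and "wf_qstate Q s" and "wf_query Q"
  shows "(t, s) \<in> qstate_order"
  using assms
proof (induction rule: qstep.induct)
  case (q_if_step F cs cs' A c q \<sigma> S)
  have "term_pres P" if "CExIt P d \<rho> I \<in> set (fst cs)" for P d \<rho> I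
    using that q_if_step.prems wf_cond_qconds by fastforce
  then have "(cs', cs) \<in> cstate_order" using cstep_decreases[OF q_if_step.hyps] by blast
  then show ?case by (auto simp: qstate_order_def intro!: mult_replace_by_one_smaller)
next
  case (q_from_unfold \<sigma> P I \<sigma>' K F A q S)
  then have "size (I - K) < size I" using wf_query_subq matches_size_Diff_less by fastforce
  then show ?case by (auto simp: qstate_order_def intro!: mult_replace_by_two_smaller)
qed (auto simp: qstate_order_def subset_implies_mult
  intro!: mult_replace_by_one_smaller mult_replace_by_two_smaller)

theorem theorem3:
  fixes inst :: "('x \<rightharpoonup> 'd) \<Rightarrow> 't \<Rightarrow> 'v"
    and bval :: "('x \<rightharpoonup> 'd) \<Rightarrow> 'b \<Rightarrow> bool"
    and fvars :: "'t \<Rightarrow> 'x set"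
    and Q :: "('t, 'b) query"
  assumes "wf_query Q"
  shows "terminating (R_query inst bval fvars Q)"
proof (rule terminating_if_converse_in_wf[OF wf_qstate_order])
  fix s t
  assume "R_query inst bval fvars Q s t"
  then show "(t, s) \<in> qstate_order" using qstep_decreases assms unfolding R_query_def by blast
qed

end
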